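(* Let $\beta>0$, $\eta>0$, $0\le T\le1$ and $-\frac12<s<0$. Then there is a constant $C>0$, independent of $T$, $u$, $v$ (depending on $s$ and the fixed parameters), such that $$\Big\|\int_0^tS(t-t')\partial_x(uv)(t')\,dt'\Big\|_{X_T^s}\le C\,e^{\frac{\eta T}{2}}T^{\frac{1+2s}{4}}\|u\|_{X_T^s}\|v\|_{X_T^s}$$ for all $u,v\in X_T^s$.
   Context: $S(t)f=\big(e^{iq(\xi)t-p(\xi)t}\widehat f\big)^\vee$ for $t\ge0$, with $q(\xi)=\beta\xi|\xi|$ and $p(\xi)=\eta(\xi^2-|\xi|)$. For $s<0$ and $0\le T\le1$, $X_T^s=\{u\in C([0,T];H^s(\mathbb{R})):\|u\|_{X_T^s}<\infty\}$ where $\|u\|_{X_T^s}=\sup_{t\in(0,T]}\big(\|u(t)\|_{H^s}+t^{|s|/2}\|u(t)\|_{L^2}\big)$; the $X_T^s$ norm on the left is applied to the function $t\mapsto\int_0^tS(t-t')\partial_x(uv)(t')dt'$. *)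

theory Defs
  imports "HOL-Analysis.Analysis"
begin

text \<open>
  Elements of H^s(R) (possibly with s < 0, i.e. distributions) are represented
  on the Fourier side: a function f :: real => complex stands for the tempered
  distribution whose Fourier transform (convention: hat f(xi) = int e^(-i x xi) f(x) dx)
  is f.  Then ||f||_{H^s}^2 = (1/(2 pi)) int (1+xi^2)^s |hat f(xi)|^2 dxi and
  the L^2 norm is the case s = 0 (Plancherel).
\<close>

definition Hs_sq :: "real \<Rightarrow> (real \<Rightarrow> complex) \<Rightarrow> ennreal" where
  "Hs_sq s f = (\<integral>\<^sup>+ \<xi>. ennreal ((1 + \<xi>\<^sup>2) powr s * (cmod (f \<xi>))\<^sup>2) \<partial>lborel)"

definition in_Hs :: "real \<Rightarrow> (real \<Rightarrow> complex) \<Rightarrow> bool" where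
  "in_Hs s f \<longleftrightarrow> f \<in> borel_measurable lborel \<and> Hs_sq s f < \<infinity>"

definition Hs_norm :: "real \<Rightarrow> (real \<Rightarrow> complex) \<Rightarrow> real" where
  "Hs_norm s f = sqrt (enn2real (Hs_sq s f) / (2 * pi))"

abbreviation in_L2 :: "(real \<Rightarrow> complex) \<Rightarrow> bool" where
  "in_L2 f \<equiv> in_Hs 0 f"

abbreviation L2_norm :: "(real \<Rightarrow> complex) \<Rightarrow> real" where
  "L2_norm f \<equiv> Hs_norm 0 f"

text \<open>A time-dependent function u is given by u t = Fourier transform of u(t).\<close>

definition Xweight :: "real \<Rightarrow> (real \<Rightarrow> real \<Rightarrow> complex) \<Rightarrow> real \<Rightarrow> real" where
  "Xweight s u t = Hs_norm s (u t) + t powr (\<bar>s\<bar> / 2) * L2_norm (u t)"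

definition in_X :: "real \<Rightarrow> real \<Rightarrow> (real \<Rightarrow> real \<Rightarrow> complex) \<Rightarrow> bool" where
  "in_X s T u \<longleftrightarrow>
     (\<forall>t\<in>{0..T}. in_Hs s (u t)) \<and>
     (\<forall>t0\<in>{0..T}. ((\<lambda>t. Hs_norm s (u t - u t0)) \<longlongrightarrow> 0) (at t0 within {0..T})) \<and>
     (\<forall>t\<in>{0<..T}. in_L2 (u t)) \<and>
     bdd_above (Xweight s u ` {0<..T})"

definition X_norm :: "real \<Rightarrow> real \<Rightarrow> (real \<Rightarrow> real \<Rightarrow> complex) \<Rightarrow> real" where
  "X_norm s T u = Sup (Xweight s u ` {0<..T})"

definition qsym :: "real \<Rightarrow> real \<Rightarrow> real" where
  "qsym \<beta> \<xi> = \<beta> * \<xi> * \<bar>\<xi>\<bar>"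

definition psym :: "real \<Rightarrow> real \<Rightarrow> real" where
  "psym \<eta> \<xi> = \<eta> * (\<xi>\<^sup>2 - \<bar>\<xi>\<bar>)"

text \<open>Fourier transform of a product: (fg)^ = (1/(2 pi)) hat f * hat g.\<close>
definition fconv :: "(real \<Rightarrow> complex) \<Rightarrow> (real \<Rightarrow> complex) \<Rightarrow> real \<Rightarrow> complex" where
  "fconv f g \<xi> = complex_of_real (1 / (2 * pi)) * (\<integral>\<zeta>. f (\<xi> - \<zeta>) * g \<zeta> \<partial>lborel)"

text \<open>Fourier transform (in x) of the Duhamel term
  int_0^t S(t-t') d_x(uv)(t') dt'.\<close>
definition duhamel :: "real \<Rightarrow> real \<Rightarrow> (real \<Rightarrow> real \<Rightarrow> complex) \<Rightarrow> (real \<Rightarrow> real \<Rightarrow> complex)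
    \<Rightarrow> real \<Rightarrow> real \<Rightarrow> complex" where
  "duhamel \<beta> \<eta> u v t \<xi> =
     set_lebesgue_integral lborel {0..t}
       (\<lambda>t'. exp (complex_of_real (t - t') * (\<i> * complex_of_real (qsym \<beta> \<xi>) - complex_of_real (psym \<eta> \<xi>)))
             * (\<i> * complex_of_real \<xi>) * fconv (u t') (v t') \<xi>)"

end

theory Submission
  imports Defs
begin

text \<open>
  On the Fourier side the dispersive factor \<open>exp(i t q(\<xi>))\<close> has modulus one. Hence the
  Duhamel term satisfies \<open>|D(t,\<xi>)| \<le> X |\<xi>| \<integral>\<^sub>0\<^sup>t exp(-(t-y) p(\<xi>)) y^s dy\<close>. Cauchy-Schwarz in \<open>y\<close>
  with the weight \<open>(t-y)^(-a) y^s\<close>, \<open>a = 3/4 + \<sigma>/2\<close>, followed by Fubini, bounds \<open>\<parallel>D(t)\<parallel>\<^sub>H\<^sub>\<sigma>\<^sup>2\<close>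
  by the heat-type integral \<open>\<integral> (1+\<xi>\<^sup>2)^\<sigma> \<xi>\<^sup>2 exp(-\<eta> \<tau> \<xi>\<^sup>2) d\<xi> \<le> C \<tau>^(-3/2-\<sigma>)\<close> (the term
  \<open>-\<eta>|\<xi>|\<close> of \<open>p\<close> costs a factor \<open>exp(\<eta> t)\<close>) times the square of the Beta-type integral
  \<open>\<integral>\<^sub>0\<^sup>t (t-y)^(-a) y^s dy \<le> C t^(1-a+s)\<close>. So \<open>\<parallel>D(t)\<parallel>\<^sub>H\<^sub>\<sigma> \<le> C exp(\<eta> t/2) t^(1/4-\<sigma>/2+s) X\<close>, and
  \<open>\<sigma> = s\<close>, \<open>\<sigma> = 0\<close> give the two parts of the \<open>X\<^sub>T\<^sup>s\<close> norm.

  Measurability of \<open>D(t)\<close> needs an argument of its own: \<open>u\<close> is continuous in time only in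
  \<open>H\<^sup>s\<close>, so the product is approximated by its frequency cutoffs, which are continuous in time
  and hence jointly measurable in \<open>(\<xi>, y)\<close>.
\<close>

section \<open>Sobolev norms and the Fourier transform of a product\<close>

lemma Hs_norm_nonneg: "Hs_norm s f \<ge> 0"
  unfolding Hs_norm_def by simp

lemma Hs_sq_eq_Hs_norm:
  assumes "Hs_sq s f < \<infinity>"
  shows "Hs_sq s f = ennreal (2 * pi * (Hs_norm s f)\<^sup>2)"
proof -
  have "2 * pi * (Hs_norm s f)\<^sup>2 = enn2real (Hs_sq s f)"
    unfolding Hs_norm_def by (simp add: real_sqrt_pow2)
  with assms show ?thesis by (simp add: less_top ennreal_enn2real)
qed

lemma Hs_norm_le_if_Hs_sq_le:
  assumes "Hs_sq s f \<le> ennreal (2 * pi * M\<^sup>2)" and "M \<ge> 0"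
  shows "Hs_norm s f \<le> M"
proof -
  have "enn2real (Hs_sq s f) \<le> 2 * pi * M\<^sup>2"
    using assms by (intro enn2real_leI) auto
  hence "Hs_norm s f \<le> sqrt (M\<^sup>2)"
    unfolding Hs_norm_def by (intro real_sqrt_le_mono) (simp add: field_simps)
  with assms(2) show ?thesis by simp
qed

lemma Hs_sq_zero: "Hs_sq 0 f = (\<integral>\<^sup>+ \<xi>. ennreal ((cmod (f \<xi>))\<^sup>2) \<partial>lborel)"
proof -
  have "(1 + \<xi>\<^sup>2) powr 0 = 1" for \<xi> :: real
    by (simp add: add_pos_nonneg order.strict_implies_not_eq[symmetric])
  thus ?thesis unfolding Hs_sq_def by simp
qed

lemma Hs_sq_diff_finite:
  assumes [measurable]: "f \<in> borel_measurable borel" "g \<in> borel_measurable borel"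
    and "Hs_sq s f < \<infinity>" "Hs_sq s g < \<infinity>"
  shows "Hs_sq s (f - g) < \<infinity>"
proof -
  have pointwise: "(cmod ((f - g) x))\<^sup>2 \<le> 2 * (cmod (f x))\<^sup>2 + 2 * (cmod (g x))\<^sup>2" for x
  proof -
    have "(cmod (f x - g x))\<^sup>2 \<le> (cmod (f x) + cmod (g x))\<^sup>2"
      by (intro power_mono norm_triangle_ineq4) auto
    also have "\<dots> \<le> 2 * (cmod (f x))\<^sup>2 + 2 * (cmod (g x))\<^sup>2"
      using sum_squares_ge_zero[of "cmod (f x) - cmod (g x)" 0] by (simp add: power2_eq_square algebra_simps)
    finally show ?thesis by simp
  qed
  have "ennreal ((1 + x\<^sup>2) powr s * (cmod ((f - g) x))\<^sup>2)
      \<le> 2 * ennreal ((1 + x\<^sup>2) powr s * (cmod (f x))\<^sup>2) + 2 * ennreal ((1 + x\<^sup>2) powr s * (cmod (g x))\<^sup>2)" for x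
  proof -
    let ?w = "(1 + x\<^sup>2) powr s"
    have "?w * (cmod ((f - g) x))\<^sup>2 \<le> ?w * (2 * (cmod (f x))\<^sup>2 + 2 * (cmod (g x))\<^sup>2)"
      using pointwise[of x] by (intro mult_left_mono) auto
    also have "\<dots> = 2 * (?w * (cmod (f x))\<^sup>2) + 2 * (?w * (cmod (g x))\<^sup>2)"
      by (simp add: algebra_simps)
    finally have "ennreal (?w * (cmod ((f - g) x))\<^sup>2)
        \<le> ennreal (2 * (?w * (cmod (f x))\<^sup>2) + 2 * (?w * (cmod (g x))\<^sup>2))"
      by (rule ennreal_leI)
    thus ?thesis by (simp add: ennreal_plus ennreal_mult)
  qed
  hence "Hs_sq s (f - g) \<le> (\<integral>\<^sup>+ x. 2 * ennreal ((1 + x\<^sup>2) powr s * (cmod (f x))\<^sup>2)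
                              + 2 * ennreal ((1 + x\<^sup>2) powr s * (cmod (g x))\<^sup>2) \<partial>lborel)"
    unfolding Hs_sq_def by (intro nn_integral_mono)
  also have "\<dots> = 2 * Hs_sq s f + 2 * Hs_sq s g"
    unfolding Hs_sq_def by (simp add: nn_integral_add nn_integral_cmult)
  also have "\<dots> < \<infinity>" using assms(3,4) by (simp add: ennreal_mult_less_top)
  finally show ?thesis .
qed

lemma norm_integral_le_nn_integral:
  fixes f :: "'a \<Rightarrow> 'b::{banach,second_countable_topology}"
  shows "ennreal (norm (integral\<^sup>L M f)) \<le> (\<integral>\<^sup>+ x. ennreal (norm (f x)) \<partial>M)"
  by (cases "integrable M f") (simp_all add: integral_norm_bound_ennreal not_integrable_integral_eq)

lemma nn_integral_convolution_Cauchy_Schwarz: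
  fixes f g :: "real \<Rightarrow> complex"
  assumes [measurable]: "f \<in> borel_measurable borel" "g \<in> borel_measurable borel"
  shows "(\<integral>\<^sup>+\<zeta>. ennreal (cmod (f (\<xi> - \<zeta>) * g \<zeta>)) \<partial>lborel)\<^sup>2 \<le> Hs_sq 0 f * Hs_sq 0 g"
proof -
  have sq: "ennreal (cmod (h x)) ^ 2 = ennreal ((cmod (h x))\<^sup>2)" for h :: "real \<Rightarrow> complex" and x
    by (simp add: ennreal_power)
  have "(\<integral>\<^sup>+\<zeta>. ennreal (cmod (f (\<xi> - \<zeta>) * g \<zeta>)) \<partial>lborel)
      = (\<integral>\<^sup>+\<zeta>. ennreal (cmod (f (\<xi> - \<zeta>))) * ennreal (cmod (g \<zeta>)) \<partial>lborel)"
    by (simp add: norm_mult ennreal_mult)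
  also have "(\<dots>)\<^sup>2 \<le> (\<integral>\<^sup>+\<zeta>. ennreal (cmod (f (\<xi> - \<zeta>))) ^ 2 \<partial>lborel) * (\<integral>\<^sup>+\<zeta>. ennreal (cmod (g \<zeta>)) ^ 2 \<partial>lborel)"
    by (rule Cauchy_Schwarz_nn_integral) auto
  also have "(\<integral>\<^sup>+\<zeta>. ennreal (cmod (f (\<xi> - \<zeta>))) ^ 2 \<partial>lborel) = Hs_sq 0 f"
    using nn_integral_real_affine[of "\<lambda>\<zeta>. ennreal ((cmod (f \<zeta>))\<^sup>2)" "-1" \<xi>]
    by (simp only: sq Hs_sq_zero) simp
  also have "(\<integral>\<^sup>+\<zeta>. ennreal (cmod (g \<zeta>)) ^ 2 \<partial>lborel) = Hs_sq 0 g"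
    by (simp only: sq Hs_sq_zero)
  finally show ?thesis .
qed

lemma norm_fconv_le:
  assumes [measurable]: "f \<in> borel_measurable borel" "g \<in> borel_measurable borel"
    and "Hs_sq 0 f \<le> ennreal (2 * pi * A\<^sup>2)" "Hs_sq 0 g \<le> ennreal (2 * pi * B\<^sup>2)" "A \<ge> 0" "B \<ge> 0"
  shows "cmod (fconv f g \<xi>) \<le> A * B"
proof -
  let ?I = "\<integral>\<zeta>. f (\<xi> - \<zeta>) * g \<zeta> \<partial>lborel"
  have "ennreal (cmod ?I) \<le> (\<integral>\<^sup>+\<zeta>. ennreal (cmod (f (\<xi> - \<zeta>) * g \<zeta>)) \<partial>lborel)"
    by (rule norm_integral_le_nn_integral)
  hence "ennreal (cmod ?I) ^ 2 \<le> (\<integral>\<^sup>+\<zeta>. ennreal (cmod (f (\<xi> - \<zeta>) * g \<zeta>)) \<partial>lborel) ^ 2"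
    by (rule power_mono) simp
  also have "\<dots> \<le> Hs_sq 0 f * Hs_sq 0 g"
    by (rule nn_integral_convolution_Cauchy_Schwarz) auto
  also have "\<dots> \<le> ennreal (2 * pi * A\<^sup>2) * ennreal (2 * pi * B\<^sup>2)"
    using assms(3,4) by (rule mult_mono) auto
  also have "\<dots> = ennreal ((2 * pi * A\<^sup>2) * (2 * pi * B\<^sup>2))"
    by (rule ennreal_mult[symmetric]) auto
  also have "\<dots> = ennreal ((2 * pi * A * B)\<^sup>2)"
    by (simp add: power2_eq_square algebra_simps)
  finally have "ennreal ((cmod ?I)\<^sup>2) \<le> ennreal ((2 * pi * A * B)\<^sup>2)"
    by (simp only: ennreal_power norm_ge_zero)
  hence "(cmod ?I)\<^sup>2 \<le> (2 * pi * A * B)\<^sup>2"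
    by (rule ennreal_le_iff[OF zero_le_power2, THEN iffD1])
  hence "cmod ?I \<le> 2 * pi * A * B"
    by (rule power2_le_imp_le) (use assms(5,6) in simp)
  moreover have "cmod (fconv f g \<xi>) = cmod ?I / (2 * pi)"
    unfolding fconv_def by (simp add: norm_divide)
  ultimately show ?thesis
    by (simp add: divide_le_eq ac_simps)
qed

lemma norm_fconv_le_L2_norm:
  assumes "in_L2 f" "in_L2 g"
  shows "cmod (fconv f g \<xi>) \<le> L2_norm f * L2_norm g"
  using assms by (intro norm_fconv_le) (auto simp: in_Hs_def Hs_norm_nonneg Hs_sq_eq_Hs_norm)

lemma integrable_convolution:
  fixes f g :: "real \<Rightarrow> complex"
  assumes [measurable]: "f \<in> borel_measurable borel" "g \<in> borel_measurable borel"
    and "Hs_sq 0 f < \<infinity>" "Hs_sq 0 g < \<infinity>"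
  shows "integrable lborel (\<lambda>\<zeta>. f (\<xi> - \<zeta>) * g \<zeta>)"
proof (rule integrableI_bounded)
  have "(\<integral>\<^sup>+\<zeta>. ennreal (cmod (f (\<xi> - \<zeta>) * g \<zeta>)) \<partial>lborel) ^ 2 < \<infinity>"
    using nn_integral_convolution_Cauchy_Schwarz[of f g \<xi>] assms(3,4)
    by (simp add: ennreal_mult_less_top le_less_trans)
  thus "(\<integral>\<^sup>+\<zeta>. ennreal (norm (f (\<xi> - \<zeta>) * g \<zeta>)) \<partial>lborel) < \<infinity>"
    by (simp add: power_less_top_ennreal)
qed simp

lemma borel_measurable_fconv [measurable]:
  assumes [measurable]: "f \<in> borel_measurable borel" "g \<in> borel_measurable borel"
  shows "fconv f g \<in> borel_measurable borel"
  unfolding fconv_def by measurable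

lemma fconv_diff:
  fixes f f0 g g0 :: "real \<Rightarrow> complex"
  assumes [measurable]: "f \<in> borel_measurable borel" "f0 \<in> borel_measurable borel"
      "g \<in> borel_measurable borel" "g0 \<in> borel_measurable borel"
    and fin: "Hs_sq 0 f < \<infinity>" "Hs_sq 0 f0 < \<infinity>" "Hs_sq 0 g < \<infinity>" "Hs_sq 0 g0 < \<infinity>"
  shows "fconv f g \<xi> - fconv f0 g0 \<xi>
       = fconv (f - f0) (g - g0) \<xi> + fconv (f - f0) g0 \<xi> + fconv f0 (g - g0) \<xi>"
proof -
  have meas_diff [measurable]: "f - f0 \<in> borel_measurable borel" "g - g0 \<in> borel_measurable borel"
    by (simp_all add: fun_diff_def)
  have fin': "Hs_sq 0 (f - f0) < \<infinity>" "Hs_sq 0 (g - g0) < \<infinity>"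
    using Hs_sq_diff_finite[OF assms(1,2) fin(1,2)] Hs_sq_diff_finite[OF assms(3,4) fin(3,4)] by auto
  note int = integrable_convolution[where \<xi> = \<xi>]
  have "(\<integral>\<zeta>. f (\<xi> - \<zeta>) * g \<zeta> \<partial>lborel) - (\<integral>\<zeta>. f0 (\<xi> - \<zeta>) * g0 \<zeta> \<partial>lborel)
      = (\<integral>\<zeta>. f (\<xi> - \<zeta>) * g \<zeta> - f0 (\<xi> - \<zeta>) * g0 \<zeta> \<partial>lborel)"
    using fin by (simp add: int)
  also have "\<dots> = (\<integral>\<zeta>. (f - f0) (\<xi> - \<zeta>) * (g - g0) \<zeta> + (f - f0) (\<xi> - \<zeta>) * g0 \<zeta> + f0 (\<xi> - \<zeta>) * (g - g0) \<zeta> \<partial>lborel)"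
    by (rule Bochner_Integration.integral_cong) (simp_all add: algebra_simps)
  also have "\<dots> = (\<integral>\<zeta>. (f - f0) (\<xi> - \<zeta>) * (g - g0) \<zeta> \<partial>lborel) + (\<integral>\<zeta>. (f - f0) (\<xi> - \<zeta>) * g0 \<zeta> \<partial>lborel)
                 + (\<integral>\<zeta>. f0 (\<xi> - \<zeta>) * (g - g0) \<zeta> \<partial>lborel)"
    using int[OF meas_diff fin'] int[OF meas_diff(1) assms(4) fin'(1) fin(4)]
      int[OF assms(2) meas_diff(2) fin(2) fin'(2)]
    by (simp only: Bochner_Integration.integral_add Bochner_Integration.integrable_add)
  finally show ?thesis
    unfolding fconv_def by (simp only: right_diff_distrib[symmetric] distrib_left[symmetric])
qed

section \<open>Measurability of the Duhamel term\<close>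

text \<open>
  On \<open>|\<xi>| \<le> n\<close> the \<open>H\<^sup>s\<close> and \<open>L\<^sup>2\<close> norms are comparable, so the cut-off product inherits the
  time continuity of \<open>u\<close> and \<open>v\<close> in \<open>H\<^sup>s\<close>, which the product itself lacks.
\<close>

definition cutoff :: "nat \<Rightarrow> (real \<Rightarrow> complex) \<Rightarrow> real \<Rightarrow> complex" where
  "cutoff n f \<xi> = (if \<bar>\<xi>\<bar> \<le> real n then f \<xi> else 0)"

lemma borel_measurable_cutoff [measurable]:
  assumes [measurable]: "f \<in> borel_measurable borel"
  shows "cutoff n f \<in> borel_measurable borel"
  unfolding cutoff_def by measurable

lemma cutoff_diff: "cutoff n (f - g) = cutoff n f - cutoff n g"
  by (auto simp: cutoff_def fun_eq_iff)

lemma Hs_sq_zero_cutoff_le: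
  assumes "s \<le> 0" and [measurable]: "f \<in> borel_measurable borel"
  shows "Hs_sq 0 (cutoff n f) \<le> ennreal ((1 + (real n)\<^sup>2) powr (-s)) * Hs_sq s f"
proof -
  have "(cmod (cutoff n f \<xi>))\<^sup>2 \<le> (1 + (real n)\<^sup>2) powr (-s) * ((1 + \<xi>\<^sup>2) powr s * (cmod (f \<xi>))\<^sup>2)" for \<xi>
  proof (cases "\<bar>\<xi>\<bar> \<le> real n")
    case True
    hence "\<xi>\<^sup>2 \<le> (real n)\<^sup>2" by (metis abs_le_square_iff abs_of_nat)
    hence "(1 + \<xi>\<^sup>2) powr (-s) \<le> (1 + (real n)\<^sup>2) powr (-s)"
      using assms(1) by (intro powr_mono2) auto
    moreover have "(1 + \<xi>\<^sup>2) powr (-s) * (1 + \<xi>\<^sup>2) powr s = 1"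
      by (simp add: powr_add[symmetric] add_pos_nonneg order.strict_implies_not_eq[symmetric])
    ultimately show ?thesis
      using True mult_right_mono[of "(1 + \<xi>\<^sup>2) powr (-s)" _ "(1 + \<xi>\<^sup>2) powr s * (cmod (f \<xi>))\<^sup>2"]
      by (simp add: cutoff_def mult.assoc[symmetric])
  qed (simp add: cutoff_def)
  hence "Hs_sq 0 (cutoff n f)
      \<le> (\<integral>\<^sup>+ \<xi>. ennreal ((1 + (real n)\<^sup>2) powr (-s)) * ennreal ((1 + \<xi>\<^sup>2) powr s * (cmod (f \<xi>))\<^sup>2) \<partial>lborel)"
    unfolding Hs_sq_zero by (intro nn_integral_mono) (simp add: ennreal_mult[symmetric] ennreal_leI)
  also have "\<dots> = ennreal ((1 + (real n)\<^sup>2) powr (-s)) * Hs_sq s f"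
    unfolding Hs_sq_def by (rule nn_integral_cmult) measurable
  finally show ?thesis .
qed

lemma Hs_sq_zero_cutoff_finite:
  "s \<le> 0 \<Longrightarrow> f \<in> borel_measurable borel \<Longrightarrow> Hs_sq s f < \<infinity> \<Longrightarrow> Hs_sq 0 (cutoff n f) < \<infinity>"
  using Hs_sq_zero_cutoff_le[of s f n] by (simp add: ennreal_mult_less_top le_less_trans)

lemma norm_fconv_cutoff_le:
  assumes "s \<le> 0" and [measurable]: "f \<in> borel_measurable borel" "g \<in> borel_measurable borel"
    and "Hs_sq s f < \<infinity>" "Hs_sq s g < \<infinity>"
  shows "cmod (fconv (cutoff n f) (cutoff n g) \<xi>) \<le> (1 + (real n)\<^sup>2) powr (-s) * Hs_norm s f * Hs_norm s g"
proof -
  define N where "N = (1 + (real n)\<^sup>2) powr (-s)"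
  have cut: "Hs_sq 0 (cutoff n h) \<le> ennreal (2 * pi * (sqrt N * Hs_norm s h)\<^sup>2)"
    if [measurable]: "h \<in> borel_measurable borel" and "Hs_sq s h < \<infinity>" for h
    using Hs_sq_zero_cutoff_le[OF assms(1) that(1), of n] Hs_sq_eq_Hs_norm[OF that(2)]
    by (simp add: N_def ennreal_mult[symmetric] power_mult_distrib ac_simps)
  have "cmod (fconv (cutoff n f) (cutoff n g) \<xi>) \<le> (sqrt N * Hs_norm s f) * (sqrt N * Hs_norm s g)"
    using assms by (intro norm_fconv_le cut) (auto simp: N_def Hs_norm_nonneg)
  also have "\<dots> = (sqrt N * sqrt N) * Hs_norm s f * Hs_norm s g"
    by (simp add: ac_simps)
  finally show ?thesis by (simp add: N_def)
qed

lemma fconv_cutoff_tendsto: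
  fixes f g :: "real \<Rightarrow> complex"
  assumes [measurable]: "f \<in> borel_measurable borel" "g \<in> borel_measurable borel"
    and "Hs_sq 0 f < \<infinity>" "Hs_sq 0 g < \<infinity>"
  shows "(\<lambda>n. fconv (cutoff n f) (cutoff n g) \<xi>) \<longlonglongrightarrow> fconv f g \<xi>"
proof -
  have "(\<lambda>n. \<integral>\<zeta>. cutoff n f (\<xi> - \<zeta>) * cutoff n g \<zeta> \<partial>lborel) \<longlonglongrightarrow> (\<integral>\<zeta>. f (\<xi> - \<zeta>) * g \<zeta> \<partial>lborel)"
  proof (rule integral_dominated_convergence)
    show "integrable lborel (\<lambda>\<zeta>. norm (f (\<xi> - \<zeta>) * g \<zeta>))"
      using assms by (intro integrable_norm integrable_convolution) auto
    show "AE \<zeta> in lborel. (\<lambda>n. cutoff n f (\<xi> - \<zeta>) * cutoff n g \<zeta>) \<longlonglongrightarrow> f (\<xi> - \<zeta>) * g \<zeta>"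
    proof (intro AE_I2 tendsto_eventually)
      fix \<zeta> :: real
      obtain N :: nat where "max \<bar>\<xi> - \<zeta>\<bar> \<bar>\<zeta>\<bar> \<le> real N" using real_arch_simple by blast
      thus "\<forall>\<^sub>F n in sequentially. cutoff n f (\<xi> - \<zeta>) * cutoff n g \<zeta> = f (\<xi> - \<zeta>) * g \<zeta>"
        unfolding eventually_sequentially cutoff_def
        by (intro exI[of _ N]) (auto dest: order.trans[OF _ of_nat_mono])
    qed
  qed (auto intro!: AE_I2 simp: cutoff_def norm_mult)
  thus ?thesis unfolding fconv_def by (intro tendsto_mult_left)
qed

lemma in_X_slice:
  assumes "in_X s T u" "y \<in> {0..T}"
  shows "u y \<in> borel_measurable borel" "Hs_sq s (u y) < \<infinity>"
  using assms unfolding in_X_def in_Hs_def by auto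

lemma norm_fconv_cutoff_diff_le:
  assumes "s \<le> 0" and [measurable]: "f \<in> borel_measurable borel" "f0 \<in> borel_measurable borel"
      "g \<in> borel_measurable borel" "g0 \<in> borel_measurable borel"
    and fin: "Hs_sq s f < \<infinity>" "Hs_sq s f0 < \<infinity>" "Hs_sq s g < \<infinity>" "Hs_sq s g0 < \<infinity>"
  shows "norm (fconv (cutoff n f) (cutoff n g) \<xi> - fconv (cutoff n f0) (cutoff n g0) \<xi>)
    \<le> (1 + (real n)\<^sup>2) powr (-s) * (Hs_norm s (f - f0) * Hs_norm s (g - g0)
         + Hs_norm s (f - f0) * Hs_norm s g0 + Hs_norm s f0 * Hs_norm s (g - g0))"
proof -
  have diff_meas [measurable]: "f - f0 \<in> borel_measurable borel" "g - g0 \<in> borel_measurable borel"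
    by (simp_all add: fun_diff_def)
  have diff_fin: "Hs_sq s (f - f0) < \<infinity>" "Hs_sq s (g - g0) < \<infinity>"
    using Hs_sq_diff_finite[OF assms(2,3) fin(1,2)] Hs_sq_diff_finite[OF assms(4,5) fin(3,4)] by auto
  define N where "N = (1 + (real n)\<^sup>2) powr (-s)"
  let ?D = "\<lambda>h k. fconv (cutoff n h) (cutoff n k) \<xi>"
  have split: "?D f g - ?D f0 g0 = ?D (f - f0) (g - g0) + ?D (f - f0) g0 + ?D f0 (g - g0)"
    unfolding cutoff_diff
    using Hs_sq_zero_cutoff_finite[OF assms(1) assms(2) fin(1)] Hs_sq_zero_cutoff_finite[OF assms(1) assms(3) fin(2)]
      Hs_sq_zero_cutoff_finite[OF assms(1) assms(4) fin(3)] Hs_sq_zero_cutoff_finite[OF assms(1) assms(5) fin(4)]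
    by (intro fconv_diff) auto
  have "norm (?D (f - f0) (g - g0)) \<le> N * Hs_norm s (f - f0) * Hs_norm s (g - g0)"
    "norm (?D (f - f0) g0) \<le> N * Hs_norm s (f - f0) * Hs_norm s g0"
    "norm (?D f0 (g - g0)) \<le> N * Hs_norm s f0 * Hs_norm s (g - g0)"
    unfolding N_def using assms diff_meas diff_fin by (auto intro!: norm_fconv_cutoff_le)
  hence "norm (?D f g - ?D f0 g0) \<le> N * Hs_norm s (f - f0) * Hs_norm s (g - g0)
      + N * Hs_norm s (f - f0) * Hs_norm s g0 + N * Hs_norm s f0 * Hs_norm s (g - g0)"
    unfolding split
    using norm_triangle_ineq[of "?D (f - f0) (g - g0) + ?D (f - f0) g0" "?D f0 (g - g0)"]
      norm_triangle_ineq[of "?D (f - f0) (g - g0)" "?D (f - f0) g0"]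
    by linarith
  thus ?thesis by (simp add: N_def algebra_simps)
qed

lemma continuous_on_fconv_cutoff:
  assumes "s \<le> 0" "in_X s T u" "in_X s T v"
  shows "continuous_on {0..T} (\<lambda>y. fconv (cutoff n (u y)) (cutoff n (v y)) \<xi>)"
  unfolding continuous_on_def
proof
  fix y0 assume y0: "y0 \<in> {0..T}"
  define du where "du y = Hs_norm s (u y - u y0)" for y
  define dv where "dv y = Hs_norm s (v y - v y0)" for y
  define bound where "bound y = (1 + (real n)\<^sup>2) powr (-s)
      * (du y * dv y + du y * Hs_norm s (v y0) + Hs_norm s (u y0) * dv y)" for y
  let ?C = "\<lambda>y. fconv (cutoff n (u y)) (cutoff n (v y)) \<xi>"
  have "norm (?C y - ?C y0) \<le> bound y" if "y \<in> {0..T}" for y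
    unfolding bound_def du_def dv_def
    using in_X_slice[OF assms(2) that] in_X_slice[OF assms(3) that] in_X_slice[OF assms(2) y0]
      in_X_slice[OF assms(3) y0]
    by (intro norm_fconv_cutoff_diff_le assms(1)) auto
  hence "eventually (\<lambda>y. norm (?C y - ?C y0) \<le> bound y) (at y0 within {0..T})"
    by (simp add: eventually_at_filter)
  moreover have "(bound \<longlongrightarrow> 0) (at y0 within {0..T})"
  proof -
    have du: "(du \<longlongrightarrow> 0) (at y0 within {0..T})" and dv: "(dv \<longlongrightarrow> 0) (at y0 within {0..T})"
      using assms(2,3) y0 unfolding in_X_def du_def dv_def by auto
    show ?thesis
      unfolding bound_def
      using tendsto_mult_left[OF tendsto_add[OF tendsto_add[OF tendsto_mult[OF du dv]
          tendsto_mult_right[OF du]] tendsto_mult_left[OF dv]]]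
      by simp
  qed
  ultimately have "((\<lambda>y. ?C y - ?C y0) \<longlongrightarrow> 0) (at y0 within {0..T})"
    by (rule Lim_null_comparison)
  thus "(?C \<longlongrightarrow> ?C y0) (at y0 within {0..T})"
    by (rule LIM_zero_cancel)
qed

lemma ceiling_grid_tendsto:
  fixes a b y :: real
  assumes "y \<in> {a..b}"
  shows "(\<lambda>m. max a (min b (real_of_int \<lceil>real (Suc m) * y\<rceil> / real (Suc m)))) \<longlonglongrightarrow> y"
proof (rule tendsto_sandwich[of "\<lambda>m. y" _ _ "\<lambda>m. y + inverse (real (Suc m))"])
  have "y \<le> max a (min b (real_of_int \<lceil>real (Suc m) * y\<rceil> / real (Suc m)))
      \<and> max a (min b (real_of_int \<lceil>real (Suc m) * y\<rceil> / real (Suc m))) \<le> y + inverse (real (Suc m))" for m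
  proof -
    define c where "c = real (Suc m)"
    have "c > 0" by (simp add: c_def)
    hence "y \<le> real_of_int \<lceil>c * y\<rceil> / c" "real_of_int \<lceil>c * y\<rceil> / c \<le> y + inverse c"
      by (simp_all add: field_simps) linarith
    with assms show ?thesis unfolding c_def[symmetric] by auto
  qed
  thus "\<forall>\<^sub>F m in sequentially. y \<le> max a (min b (real_of_int \<lceil>real (Suc m) * y\<rceil> / real (Suc m)))"
    "\<forall>\<^sub>F m in sequentially. max a (min b (real_of_int \<lceil>real (Suc m) * y\<rceil> / real (Suc m))) \<le> y + inverse (real (Suc m))"
    by simp_all
  show "(\<lambda>m. y + inverse (real (Suc m))) \<longlonglongrightarrow> y"
    using tendsto_add[OF tendsto_const[of y] LIMSEQ_inverse_real_of_nat] by simp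
qed simp

lemma borel_measurable_continuous_in_snd:
  fixes F :: "real \<Rightarrow> real \<Rightarrow> 'b::{real_normed_vector, second_countable_topology}"
  assumes "a \<le> b"
    and meas: "\<And>y. y \<in> {a..b} \<Longrightarrow> F y \<in> borel_measurable borel"
    and cont: "\<And>\<xi>. continuous_on {a..b} (\<lambda>y. F y \<xi>)"
  shows "(\<lambda>p. indicator {a..b} (snd p) *\<^sub>R F (snd p) (fst p)) \<in> borel_measurable (lborel \<Otimes>\<^sub>M lborel)"
proof -
  define grid where "grid m y = max a (min b (real_of_int \<lceil>real (Suc m) * y\<rceil> / real (Suc m)))"
    for m :: nat and y :: real
  have approx: "(\<lambda>p. indicator {a..b} (snd p) *\<^sub>R F (grid m (snd p)) (fst p)) \<in> borel_measurable (lborel \<Otimes>\<^sub>M lborel)"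
    for m
  proof -
    define G where "G i p = indicator {a..b} (snd p) *\<^sub>R F (max a (min b (real_of_int i / real (Suc m)))) (fst p)"
      for i :: int and p :: "real \<times> real"
    have "(\<lambda>p. G \<lceil>real (Suc m) * snd p\<rceil> p) \<in> borel_measurable (lborel \<Otimes>\<^sub>M lborel)"
    proof (rule measurable_compose_countable)
      fix i :: int
      have [measurable]: "F (max a (min b (real_of_int i / real (Suc m)))) \<in> borel_measurable borel"
        using meas \<open>a \<le> b\<close> by auto
      show "(\<lambda>p. G i p) \<in> borel_measurable (lborel \<Otimes>\<^sub>M lborel)"
        unfolding G_def by measurable
    qed measurable
    thus ?thesis by (simp add: grid_def G_def)
  qed
  show ?thesis
  proof (rule borel_measurable_LIMSEQ_metric[OF approx])
    fix p :: "real \<times> real"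
    show "(\<lambda>m. indicator {a..b} (snd p) *\<^sub>R F (grid m (snd p)) (fst p))
        \<longlonglongrightarrow> indicator {a..b} (snd p) *\<^sub>R F (snd p) (fst p)"
    proof (cases "snd p \<in> {a..b}")
      case True
      have "\<forall>m. grid m (snd p) \<in> {a..b}" using \<open>a \<le> b\<close> by (auto simp: grid_def)
      moreover have "(\<lambda>m. grid m (snd p)) \<longlonglongrightarrow> snd p"
        unfolding grid_def by (rule ceiling_grid_tendsto[OF True])
      ultimately have "(\<lambda>m. F (grid m (snd p)) (fst p)) \<longlonglongrightarrow> F (snd p) (fst p)"
        using continuous_on_sequentially[THEN iffD1, OF cont[of "fst p"], rule_format, of "snd p" "\<lambda>m. grid m (snd p)"] True
        by (simp add: comp_def)
      thus ?thesis using True by simp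
    qed simp
  qed
qed

lemma borel_measurable_duhamel:
  assumes "s \<le> 0" "in_X s T u" "in_X s T v" "0 < t" "t \<le> T"
  shows "duhamel \<beta> \<eta> u v t \<in> borel_measurable lborel"
proof -
  define K where "K n p = indicator {0..t} (snd p) *\<^sub>R fconv (cutoff n (u (snd p))) (cutoff n (v (snd p))) (fst p)"
    for n p
  have [measurable]: "K n \<in> borel_measurable (lborel \<Otimes>\<^sub>M lborel)" for n
    unfolding K_def using assms in_X_slice(1)[OF assms(2)] in_X_slice(1)[OF assms(3)]
    by (intro borel_measurable_continuous_in_snd continuous_on_subset[OF continuous_on_fconv_cutoff])
       (auto intro!: borel_measurable_fconv borel_measurable_cutoff)
  define K_lim where "K_lim p = indicator {0<..t} (snd p) *\<^sub>R fconv (u (snd p)) (v (snd p)) (fst p)" for p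
  have [measurable]: "K_lim \<in> borel_measurable (lborel \<Otimes>\<^sub>M lborel)"
  proof (rule borel_measurable_LIMSEQ_metric)
    show "(\<lambda>p. indicator {0<..t} (snd p) *\<^sub>R K n p) \<in> borel_measurable (lborel \<Otimes>\<^sub>M lborel)" for n
      by measurable
    fix p :: "real \<times> real"
    show "(\<lambda>n. indicator {0<..t} (snd p) *\<^sub>R K n p) \<longlonglongrightarrow> K_lim p"
    proof (cases "snd p \<in> {0<..t}")
      case True
      hence "snd p \<in> {0<..T}" using assms by auto
      hence "in_L2 (u (snd p))" "in_L2 (v (snd p))" using assms(2,3) by (auto simp: in_X_def)
      hence "(\<lambda>n. fconv (cutoff n (u (snd p))) (cutoff n (v (snd p))) (fst p)) \<longlonglongrightarrow> K_lim p"
        using True unfolding K_lim_def by (auto simp: in_Hs_def intro!: fconv_cutoff_tendsto)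
      thus ?thesis using True by (simp add: K_def)
    qed (simp add: K_lim_def)
  qed
  have [measurable]: "fconv (u 0) (v 0) \<in> borel_measurable borel"
    using in_X_slice[OF assms(2), of 0] in_X_slice[OF assms(3), of 0] assms(4,5) by auto
  define H where "H \<xi> y = exp (complex_of_real (t - y) * (\<i> * complex_of_real (qsym \<beta> \<xi>) - complex_of_real (psym \<eta> \<xi>)))
      * (\<i> * complex_of_real \<xi>) * (K_lim (\<xi>, y) + indicator {0} y *\<^sub>R fconv (u 0) (v 0) \<xi>)" for \<xi> y
  \<comment> \<open>The slice \<open>y = 0\<close>, where only \<open>H\<^sup>s\<close> information is available, is added back by hand.\<close>
  have "case_prod H \<in> borel_measurable (lborel \<Otimes>\<^sub>M lborel)"
    unfolding H_def qsym_def psym_def case_prod_beta' by measurable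
  moreover have "duhamel \<beta> \<eta> u v t = (\<lambda>\<xi>. \<integral>y. H \<xi> y \<partial>lborel)"
    unfolding duhamel_def set_lebesgue_integral_def H_def K_lim_def
    using assms(4) by (intro ext Bochner_Integration.integral_cong) (auto simp: indicator_def)
  ultimately show ?thesis
    by (simp add: lborel.borel_measurable_lebesgue_integral)
qed

section \<open>Pointwise bound on the Duhamel term\<close>

lemma Xweight_le_X_norm:
  assumes "in_X s T u" "t \<in> {0<..T}"
  shows "Xweight s u t \<le> X_norm s T u"
  unfolding X_norm_def using assms by (intro cSup_upper) (auto simp: in_X_def)

lemma X_norm_nonneg:
  assumes "in_X s T u" "t \<in> {0<..T}"
  shows "X_norm s T u \<ge> 0"
proof -
  have "0 \<le> Xweight s u t" unfolding Xweight_def by (simp add: Hs_norm_nonneg)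
  with Xweight_le_X_norm[OF assms] show ?thesis by linarith
qed

lemma L2_norm_le_X_norm:
  assumes "in_X s T u" "t \<in> {0<..T}" "s \<le> 0"
  shows "L2_norm (u t) \<le> t powr (s / 2) * X_norm s T u"
proof -
  have "t powr (-s / 2) * L2_norm (u t) \<le> X_norm s T u"
    using Xweight_le_X_norm[OF assms(1,2)] Hs_norm_nonneg[of s "u t"] assms(3)
    unfolding Xweight_def by simp
  hence "t powr (s / 2) * (t powr (-s / 2) * L2_norm (u t)) \<le> t powr (s / 2) * X_norm s T u"
    by (simp add: mult_left_mono)
  moreover have "t powr (s / 2) * t powr (-s / 2) = 1"
    using assms(2) by (simp add: powr_add[symmetric])
  ultimately show ?thesis by (simp add: mult.assoc[symmetric])
qed

lemma norm_fconv_le_X_norm: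
  assumes "s \<le> 0" "in_X s T u" "in_X s T v" "y \<in> {0<..T}"
  shows "cmod (fconv (u y) (v y) \<xi>) \<le> y powr s * (X_norm s T u * X_norm s T v)"
proof -
  have "cmod (fconv (u y) (v y) \<xi>) \<le> L2_norm (u y) * L2_norm (v y)"
    using assms(2-4) by (intro norm_fconv_le_L2_norm) (auto simp: in_X_def)
  also have "\<dots> \<le> (y powr (s / 2) * X_norm s T u) * (y powr (s / 2) * X_norm s T v)"
    using L2_norm_le_X_norm[OF assms(2,4,1)] L2_norm_le_X_norm[OF assms(3,4,1)] X_norm_nonneg[OF assms(2,4)]
    by (intro mult_mono) (auto simp: Hs_norm_nonneg)
  also have "\<dots> = y powr s * (X_norm s T u * X_norm s T v)"
    using assms(4) by (simp add: powr_add[symmetric] ac_simps)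
  finally show ?thesis .
qed

lemma norm_duhamel_le:
  assumes "s \<le> 0" "in_X s T u" "in_X s T v" "0 < t" "t \<le> T"
  shows "ennreal (cmod (duhamel \<beta> \<eta> u v t \<xi>))
    \<le> (\<integral>\<^sup>+ y. ennreal (indicator {0<..<t} y *
           (exp (-((t - y) * psym \<eta> \<xi>)) * \<bar>\<xi>\<bar> * (y powr s * (X_norm s T u * X_norm s T v)))) \<partial>lborel)"
proof -
  define \<Phi> where "\<Phi> y = exp (complex_of_real (t - y) * (\<i> * complex_of_real (qsym \<beta> \<xi>) - complex_of_real (psym \<eta> \<xi>)))
      * (\<i> * complex_of_real \<xi>) * fconv (u y) (v y) \<xi>" for y
  have "ennreal (cmod (duhamel \<beta> \<eta> u v t \<xi>)) \<le> (\<integral>\<^sup>+ y. ennreal (norm (indicator {0..t} y *\<^sub>R \<Phi> y)) \<partial>lborel)"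
    unfolding duhamel_def \<Phi>_def set_lebesgue_integral_def by (rule norm_integral_le_nn_integral)
  also have "\<dots> \<le> (\<integral>\<^sup>+ y. ennreal (indicator {0<..<t} y *
           (exp (-((t - y) * psym \<eta> \<xi>)) * \<bar>\<xi>\<bar> * (y powr s * (X_norm s T u * X_norm s T v)))) \<partial>lborel)"
  proof (rule nn_integral_mono_AE)
    \<comment> \<open>At \<open>y = 0\<close> the data are only in \<open>H\<^sup>s\<close>; the endpoints are a null set.\<close>
    have "AE y in lborel. y \<noteq> 0" "AE y in lborel. y \<noteq> t" by (rule AE_lborel_singleton)+
    thus "AE y in lborel. ennreal (norm (indicator {0..t} y *\<^sub>R \<Phi> y)) \<le> ennreal (indicator {0<..<t} y *
           (exp (-((t - y) * psym \<eta> \<xi>)) * \<bar>\<xi>\<bar> * (y powr s * (X_norm s T u * X_norm s T v))))"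
    proof eventually_elim
      case (elim y)
      show ?case
      proof (cases "y \<in> {0<..<t}")
        case True
        hence "cmod (fconv (u y) (v y) \<xi>) \<le> y powr s * (X_norm s T u * X_norm s T v)"
          using assms by (intro norm_fconv_le_X_norm) auto
        hence "cmod (\<Phi> y) \<le> exp (-((t - y) * psym \<eta> \<xi>)) * \<bar>\<xi>\<bar> * (y powr s * (X_norm s T u * X_norm s T v))"
          unfolding \<Phi>_def by (simp add: norm_mult mult_left_mono)
        thus ?thesis using True by (intro ennreal_leI) simp
      qed (use elim in auto)
    qed
  qed
  finally show ?thesis .
qed

section \<open>The frequency and time integrals\<close>

lemma exp_neg_le_two_div_sq:
  fixes y :: real
  assumes "y > 0"
  shows "exp (-y) \<le> 2 / y\<^sup>2"
proof -
  have "y\<^sup>2 / 2 \<le> exp y"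
    using exp_lower_Taylor_quadratic[of y] assms by simp
  hence "exp (-y) * y\<^sup>2 \<le> 2"
    by (simp add: exp_minus field_simps)
  thus ?thesis using assms by (simp add: field_simps)
qed

lemma exp_psym_le:
  assumes "\<eta> > 0" "\<tau> > 0" "\<tau> \<le> t"
  shows "exp (-(2 * \<tau> * psym \<eta> \<xi>)) \<le> exp (\<eta> * t) * exp (-(\<eta> * \<xi>\<^sup>2 * \<tau>))"
proof -
  have "2 * \<bar>\<xi>\<bar> \<le> \<xi>\<^sup>2 + 1"
    using sum_squares_ge_zero[of "\<bar>\<xi>\<bar> - 1" 0] by (simp add: power2_eq_square algebra_simps)
  hence "\<eta> * \<tau> * (2 * \<bar>\<xi>\<bar>) \<le> \<eta> * \<tau> * (\<xi>\<^sup>2 + 1)"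
    using assms by (intro mult_left_mono) auto
  moreover have "\<eta> * \<tau> \<le> \<eta> * t" using assms by simp
  ultimately have "-(2 * \<tau> * psym \<eta> \<xi>) \<le> \<eta> * t + -(\<eta> * \<xi>\<^sup>2 * \<tau>)"
    unfolding psym_def by (simp add: algebra_simps)
  thus ?thesis by (simp flip: exp_add)
qed

lemma nn_integral_powr_Icc:
  fixes a c :: real
  assumes "a > -1" "c \<ge> 0"
  shows "(\<integral>\<^sup>+ x. ennreal (indicator {0..c} x * x powr a) \<partial>lborel) = ennreal (c powr (a + 1) / (a + 1))"
  using nn_integral_has_integral_lebesgue[OF _ has_integral_powr_from_0[OF assms]] by simp

lemma nn_integral_powr_Ici:
  fixes e c :: real
  assumes "e < -1" "c > 0"
  shows "(\<integral>\<^sup>+ x. ennreal (indicator {c..} x * x powr e) \<partial>lborel) = ennreal (-(c powr (e + 1)) / (e + 1))"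
  using nn_integral_has_integral_lebesgue[OF _ has_integral_powr_to_inf[OF assms]] by simp

lemma nn_integral_abs_le:
  fixes g :: "real \<Rightarrow> real"
  assumes [measurable]: "g \<in> borel_measurable borel" and nonneg: "\<And>x. g x \<ge> 0"
  shows "(\<integral>\<^sup>+ \<xi>. ennreal (g \<bar>\<xi>\<bar>) \<partial>lborel) \<le> 2 * (\<integral>\<^sup>+ \<xi>. ennreal (indicator {0..} \<xi> * g \<xi>) \<partial>lborel)"
proof -
  have "(\<integral>\<^sup>+ \<xi>. ennreal (g \<bar>\<xi>\<bar>) \<partial>lborel) \<le>
      (\<integral>\<^sup>+ \<xi>. ennreal (indicator {0..} \<xi> * g \<xi>) + ennreal (indicator {0..} (0 + (-1) * \<xi>) * g (0 + (-1) * \<xi>)) \<partial>lborel)"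
    by (intro nn_integral_mono) (auto simp: indicator_def nonneg)
  also have "\<dots> = (\<integral>\<^sup>+ \<xi>. ennreal (indicator {0..} \<xi> * g \<xi>) \<partial>lborel)
      + (\<integral>\<^sup>+ \<xi>. ennreal (indicator {0..} (0 + (-1) * \<xi>) * g (0 + (-1) * \<xi>)) \<partial>lborel)"
    by (intro nn_integral_add) auto
  also have "(\<integral>\<^sup>+ \<xi>. ennreal (indicator {0..} (0 + (-1) * \<xi>) * g (0 + (-1) * \<xi>)) \<partial>lborel)
      = (\<integral>\<^sup>+ \<xi>. ennreal (indicator {0..} \<xi> * g \<xi>) \<partial>lborel)"
    using nn_integral_real_affine[of "\<lambda>\<xi>. ennreal (indicator {0..} \<xi> * g \<xi>)" "-1" 0] by simp
  finally show ?thesis by (simp add: mult_2)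
qed

definition freq_const :: "real \<Rightarrow> real \<Rightarrow> real" where
  "freq_const \<sigma> \<eta> = 2 * (1 / (3 + 2 * \<sigma>) + 2 / (\<eta>\<^sup>2 * (1 - 2 * \<sigma>)))"

lemma heat_weight_le:
  fixes \<sigma> \<eta> \<tau> x :: real
  assumes "\<sigma> \<le> 0" "\<eta> > 0" "\<tau> > 0" "x \<ge> 0"
  shows "(1 + x\<^sup>2) powr \<sigma> * x\<^sup>2 * exp (-(\<eta> * x\<^sup>2 * \<tau>))
    \<le> indicator {0..\<tau> powr (-1/2)} x * x powr (2 + 2 * \<sigma>)
      + 2 / (\<eta>\<^sup>2 * \<tau>\<^sup>2) * (indicator {\<tau> powr (-1/2)..} x * x powr (2 * \<sigma> - 2))"
    (is "?lhs \<le> ?rhs")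
proof (cases "x = 0")
  case False
  hence x: "x > 0" using assms(4) by simp
  have "(1 + x\<^sup>2) powr \<sigma> * x\<^sup>2 \<le> (x\<^sup>2) powr \<sigma> * x\<^sup>2"
    using x assms(1) by (intro mult_right_mono powr_mono2') auto
  also have "\<dots> = x powr (2 + 2 * \<sigma>)"
    using x by (simp add: powr_powr powr_add flip: powr_numeral)
  finally have "?lhs \<le> x powr (2 + 2 * \<sigma>) * exp (-(\<eta> * x\<^sup>2 * \<tau>))"
    by (rule mult_right_mono) simp
  also have "\<dots> \<le> ?rhs"
  proof (cases "x < \<tau> powr (-1/2)")
    case True
    have "x powr (2 + 2 * \<sigma>) * exp (-(\<eta> * x\<^sup>2 * \<tau>)) \<le> x powr (2 + 2 * \<sigma>)"
      using assms by (intro mult_left_le) auto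
    thus ?thesis using True x by (simp add: indicator_def)
  next
    case False
    have "x powr (2 + 2 * \<sigma>) * exp (-(\<eta> * x\<^sup>2 * \<tau>)) \<le> x powr (2 + 2 * \<sigma>) * (2 / (\<eta> * x\<^sup>2 * \<tau>)\<^sup>2)"
      using x assms by (intro mult_left_mono exp_neg_le_two_div_sq) auto
    also have "\<dots> = 2 / (\<eta>\<^sup>2 * \<tau>\<^sup>2) * x powr (2 * \<sigma> - 2)"
    proof -
      have "x powr (2 + 2 * \<sigma>) = x powr (2 * \<sigma> - 2) * x ^ 4"
        using x by (simp add: powr_add[symmetric] flip: powr_numeral)
      thus ?thesis using x assms by (simp add: field_simps power2_eq_square power4_eq_xxxx)
    qed
    finally have "x powr (2 + 2 * \<sigma>) * exp (-(\<eta> * x\<^sup>2 * \<tau>)) \<le> 2 / (\<eta>\<^sup>2 * \<tau>\<^sup>2) * x powr (2 * \<sigma> - 2)" .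
    moreover have "?rhs = indicator {0..\<tau> powr (-1/2)} x * x powr (2 + 2 * \<sigma>) + 2 / (\<eta>\<^sup>2 * \<tau>\<^sup>2) * x powr (2 * \<sigma> - 2)"
      using False by simp
    moreover have "0 \<le> indicator {0..\<tau> powr (-1/2)} x * x powr (2 + 2 * \<sigma>)"
      by simp
    ultimately show ?thesis by linarith
  qed
  finally show ?thesis .
qed (use assms in \<open>auto simp: indicator_def\<close>)

lemma heat_majorant_integral_eq:
  fixes \<sigma> \<eta> \<tau> :: real
  assumes "\<eta> > 0" "\<tau> > 0"
  shows "(\<tau> powr (-1/2)) powr (3 + 2 * \<sigma>) / (3 + 2 * \<sigma>)
      + 2 / (\<eta>\<^sup>2 * \<tau>\<^sup>2) * ((\<tau> powr (-1/2)) powr (2 * \<sigma> - 1) / (1 - 2 * \<sigma>))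
    = freq_const \<sigma> \<eta> / 2 * \<tau> powr (-3/2 - \<sigma>)"
proof -
  have "(\<tau> powr (-1/2)) powr (3 + 2 * \<sigma>) = \<tau> powr (-3/2 - \<sigma>)"
    unfolding powr_powr by (intro arg_cong[where f = "(powr) \<tau>"]) (simp add: field_simps)
  moreover have "2 / (\<eta>\<^sup>2 * \<tau>\<^sup>2) * (\<tau> powr (-1/2)) powr (2 * \<sigma> - 1) = 2 / \<eta>\<^sup>2 * \<tau> powr (-3/2 - \<sigma>)"
  proof -
    have "(\<tau> powr (-1/2)) powr (2 * \<sigma> - 1) = \<tau> powr (-3/2 - \<sigma>) * \<tau> powr 2"
      by (simp add: powr_powr powr_add[symmetric] algebra_simps)
    thus ?thesis using assms by (simp add: field_simps)
  qed
  ultimately show ?thesis by (simp add: freq_const_def field_simps)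
qed

lemma nn_integral_heat_weight_le:
  fixes \<sigma> \<eta> \<tau> :: real
  assumes \<sigma>: "-1/2 < \<sigma>" "\<sigma> \<le> 0" and "\<eta> > 0" "\<tau> > 0"
  shows "(\<integral>\<^sup>+ \<xi>. ennreal ((1 + \<xi>\<^sup>2) powr \<sigma> * \<xi>\<^sup>2 * exp (-(\<eta> * \<xi>\<^sup>2 * \<tau>))) \<partial>lborel)
    \<le> ennreal (freq_const \<sigma> \<eta> * \<tau> powr (-3/2 - \<sigma>))"
proof -
  define R where "R = \<tau> powr (-1/2)"
  define K where "K = 2 / (\<eta>\<^sup>2 * \<tau>\<^sup>2)"
  have R: "R > 0" and K: "K > 0" using assms by (simp_all add: R_def K_def)
  define g where "g x = indicator {0..R} x * x powr (2 + 2 * \<sigma>) + K * (indicator {R..} x * x powr (2 * \<sigma> - 2))"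
    for x :: real
  have g_nonneg: "g x \<ge> 0" for x using K by (auto simp: g_def indicator_def)
  have [measurable]: "g \<in> borel_measurable borel" unfolding g_def by measurable
  have "(\<integral>\<^sup>+ \<xi>. ennreal ((1 + \<xi>\<^sup>2) powr \<sigma> * \<xi>\<^sup>2 * exp (-(\<eta> * \<xi>\<^sup>2 * \<tau>))) \<partial>lborel)
      \<le> (\<integral>\<^sup>+ \<xi>. ennreal (g \<bar>\<xi>\<bar>) \<partial>lborel)"
    using heat_weight_le[of \<sigma> \<eta> \<tau> "\<bar>_\<bar>"] assms
    by (intro nn_integral_mono ennreal_leI) (simp add: g_def R_def K_def)
  also have "\<dots> \<le> 2 * (\<integral>\<^sup>+ \<xi>. ennreal (indicator {0..} \<xi> * g \<xi>) \<partial>lborel)"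
    by (rule nn_integral_abs_le) (auto simp: g_nonneg)
  also have "(\<integral>\<^sup>+ \<xi>. ennreal (indicator {0..} \<xi> * g \<xi>) \<partial>lborel)
      = (\<integral>\<^sup>+ \<xi>. ennreal (indicator {0..R} \<xi> * \<xi> powr (2 + 2 * \<sigma>))
           + ennreal K * ennreal (indicator {R..} \<xi> * \<xi> powr (2 * \<sigma> - 2)) \<partial>lborel)"
    using R K by (intro nn_integral_cong)
      (auto simp: g_def indicator_def ennreal_mult'' ennreal_plus[symmetric])
  also have "\<dots> = (\<integral>\<^sup>+ \<xi>. ennreal (indicator {0..R} \<xi> * \<xi> powr (2 + 2 * \<sigma>)) \<partial>lborel)
      + ennreal K * (\<integral>\<^sup>+ \<xi>. ennreal (indicator {R..} \<xi> * \<xi> powr (2 * \<sigma> - 2)) \<partial>lborel)"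
    by (simp add: nn_integral_add nn_integral_cmult)
  also have "\<dots> = ennreal (R powr (3 + 2 * \<sigma>) / (3 + 2 * \<sigma>) + K * (R powr (2 * \<sigma> - 1) / (1 - 2 * \<sigma>)))"
  proof -
    have "(\<integral>\<^sup>+ \<xi>. ennreal (indicator {0..R} \<xi> * \<xi> powr (2 + 2 * \<sigma>)) \<partial>lborel)
        = ennreal (R powr (3 + 2 * \<sigma>) / (3 + 2 * \<sigma>))"
      using nn_integral_powr_Icc[of "2 + 2 * \<sigma>" R] \<sigma> R by (simp add: add_ac)
    moreover have "(\<integral>\<^sup>+ \<xi>. ennreal (indicator {R..} \<xi> * \<xi> powr (2 * \<sigma> - 2)) \<partial>lborel)
        = ennreal (R powr (2 * \<sigma> - 1) / (1 - 2 * \<sigma>))"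
    proof -
      have "-(R powr (2 * \<sigma> - 2 + 1)) / (2 * \<sigma> - 2 + 1) = R powr (2 * \<sigma> - 1) / (1 - 2 * \<sigma>)"
        using \<sigma> by (simp add: field_simps)
      thus ?thesis using nn_integral_powr_Ici[of "2 * \<sigma> - 2" R] \<sigma> R by simp
    qed
    moreover have "ennreal K * ennreal (R powr (2 * \<sigma> - 1) / (1 - 2 * \<sigma>))
        = ennreal (K * (R powr (2 * \<sigma> - 1) / (1 - 2 * \<sigma>)))"
      using K \<sigma> by (intro ennreal_mult[symmetric]) auto
    ultimately show ?thesis
      using \<sigma> K R by (simp only:) (intro ennreal_plus[symmetric]; simp)
  qed
  also have "R powr (3 + 2 * \<sigma>) / (3 + 2 * \<sigma>) + K * (R powr (2 * \<sigma> - 1) / (1 - 2 * \<sigma>))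
      = freq_const \<sigma> \<eta> / 2 * \<tau> powr (-3/2 - \<sigma>)"
    unfolding R_def K_def by (rule heat_majorant_integral_eq[OF assms(3,4)])
  also have "2 * ennreal (freq_const \<sigma> \<eta> / 2 * \<tau> powr (-3/2 - \<sigma>)) = ennreal (freq_const \<sigma> \<eta> * \<tau> powr (-3/2 - \<sigma>))"
  proof -
    have "0 \<le> freq_const \<sigma> \<eta> * \<tau> powr (-3/2 - \<sigma>)"
      unfolding freq_const_def using \<sigma> by (intro mult_nonneg_nonneg add_nonneg_nonneg) auto
    thus ?thesis using ennreal_mult[of 2 "freq_const \<sigma> \<eta> / 2 * \<tau> powr (-3/2 - \<sigma>)"] by simp
  qed
  finally show ?thesis .
qed

definition time_const :: "real \<Rightarrow> real \<Rightarrow> real" where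
  "time_const a s = 2 powr a / (1 + s) + 2 powr (-s) / (1 - a)"

lemma time_kernel_le_split:
  fixes t a s y :: real
  assumes "0 < t" "0 < a" "s < 0"
  shows "indicator {0<..<t} y * ((t - y) powr (-a) * y powr s)
    \<le> (t / 2) powr (-a) * (indicator {0..t} y * y powr s) + (t / 2) powr s * (indicator {0<..<t} y * (t - y) powr (-a))"
proof (cases "y \<in> {0<..<t}")
  case True
  \<comment> \<open>Each factor is bounded by its value at \<open>t / 2\<close> on the half of the interval where it is not singular.\<close>
  show ?thesis
  proof (cases "y \<le> t / 2")
    case True
    hence "(t - y) powr (-a) \<le> (t / 2) powr (-a)" using \<open>y \<in> {0<..<t}\<close> assms by (intro powr_mono2') auto
    hence "(t - y) powr (-a) * y powr s \<le> (t / 2) powr (-a) * y powr s" by (rule mult_right_mono) simp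
    thus ?thesis using \<open>y \<in> {0<..<t}\<close> by (simp add: add_increasing2)
  next
    case False
    hence "y powr s \<le> (t / 2) powr s" using assms by (intro powr_mono2') auto
    hence "(t - y) powr (-a) * y powr s \<le> (t / 2) powr s * (t - y) powr (-a)"
      by (subst mult.commute, rule mult_right_mono) simp_all
    thus ?thesis using True by (simp add: add_increasing)
  qed
qed simp

lemma nn_integral_time_kernel_le:
  fixes t a s :: real
  assumes t: "0 < t" and a: "0 < a" "a < 1" and s: "-1 < s" "s < 0"
  shows "(\<integral>\<^sup>+ y. ennreal (indicator {0<..<t} y * ((t - y) powr (-a) * y powr s)) \<partial>lborel)
    \<le> ennreal (time_const a s * t powr (1 - a + s))"
proof -
  define A where "A = (t / 2) powr (-a)"
  define B where "B = (t / 2) powr s"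
  have AB: "A \<ge> 0" "B \<ge> 0" by (simp_all add: A_def B_def)
  note pointwise = time_kernel_le_split[OF t a(1) s(2), folded A_def B_def]
  have "(\<integral>\<^sup>+ y. ennreal (indicator {0<..<t} y * ((t - y) powr (-a) * y powr s)) \<partial>lborel)
      \<le> (\<integral>\<^sup>+ y. ennreal A * ennreal (indicator {0..t} y * y powr s)
          + ennreal B * ennreal (indicator {0<..<t} y * (t - y) powr (-a)) \<partial>lborel)"
    using AB by (intro nn_integral_mono)
      (simp add: ennreal_mult[symmetric] ennreal_plus[symmetric] ennreal_leI pointwise del: ennreal_plus)
  also have "\<dots> = ennreal A * (\<integral>\<^sup>+ y. ennreal (indicator {0..t} y * y powr s) \<partial>lborel)
      + ennreal B * (\<integral>\<^sup>+ y. ennreal (indicator {0<..<t} y * (t - y) powr (-a)) \<partial>lborel)"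
    by (simp add: nn_integral_add nn_integral_cmult)
  also have "(\<integral>\<^sup>+ y. ennreal (indicator {0..t} y * y powr s) \<partial>lborel) = ennreal (t powr (1 + s) / (1 + s))"
    using nn_integral_powr_Icc[of s t] s t by (simp add: add.commute)
  also have "(\<integral>\<^sup>+ y. ennreal (indicator {0<..<t} y * (t - y) powr (-a)) \<partial>lborel)
      \<le> ennreal (t powr (1 - a) / (1 - a))"
  proof -
    have "(\<integral>\<^sup>+ y. ennreal (indicator {0<..<t} y * (t - y) powr (-a)) \<partial>lborel)
        = (\<integral>\<^sup>+ x. ennreal (indicator {0<..<t} (t + (-1) * x) * (t - (t + (-1) * x)) powr (-a)) \<partial>lborel)"
      using nn_integral_real_affine[of "\<lambda>y. ennreal (indicator {0<..<t} y * (t - y) powr (-a))" "-1" t]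
      by simp
    also have "\<dots> \<le> (\<integral>\<^sup>+ x. ennreal (indicator {0..t} x * x powr (-a)) \<partial>lborel)"
      by (intro nn_integral_mono ennreal_leI) (auto simp: indicator_def)
    also have "\<dots> = ennreal (t powr (1 - a) / (1 - a))"
      using nn_integral_powr_Icc[of "-a" t] a t by simp
    finally show ?thesis .
  qed
  finally have "(\<integral>\<^sup>+ y. ennreal (indicator {0<..<t} y * ((t - y) powr (-a) * y powr s)) \<partial>lborel)
      \<le> ennreal (A * (t powr (1 + s) / (1 + s)) + B * (t powr (1 - a) / (1 - a)))"
    using AB a s by (simp add: ennreal_mult[symmetric] ennreal_plus[symmetric] mult_left_mono del: ennreal_plus)
  also have "A * (t powr (1 + s) / (1 + s)) + B * (t powr (1 - a) / (1 - a)) = time_const a s * t powr (1 - a + s)"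
  proof -
    have "A * t powr (1 + s) = 2 powr a * t powr (1 - a + s)"
      unfolding A_def using t by (simp add: powr_divide powr_minus_divide powr_add[symmetric] field_simps)
    moreover have "B * t powr (1 - a) = 2 powr (-s) * t powr (1 - a + s)"
      unfolding B_def using t by (simp add: powr_divide powr_minus_divide powr_add[symmetric] field_simps)
    ultimately show ?thesis by (simp add: time_const_def field_simps)
  qed
  finally show ?thesis .
qed

section \<open>The smoothing estimate\<close>

lemma nn_integral_Cauchy_Schwarz_weighted:
  fixes \<phi> w :: "'a \<Rightarrow> real"
  assumes [measurable]: "\<phi> \<in> borel_measurable M" "w \<in> borel_measurable M"
    and nonneg: "\<And>x. 0 \<le> \<phi> x" "\<And>x. 0 \<le> w x" and support: "\<And>x. w x = 0 \<Longrightarrow> \<phi> x = 0"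
  shows "(\<integral>\<^sup>+x. ennreal (\<phi> x) \<partial>M)\<^sup>2 \<le> (\<integral>\<^sup>+x. ennreal (w x) \<partial>M) * (\<integral>\<^sup>+x. ennreal ((\<phi> x)\<^sup>2 / w x) \<partial>M)"
proof -
  have "ennreal (\<phi> x) = ennreal (sqrt (w x)) * ennreal (\<phi> x / sqrt (w x))" for x
    using nonneg[of x] support[of x] by (cases "w x = 0") (simp_all add: ennreal_mult[symmetric])
  hence "(\<integral>\<^sup>+x. ennreal (\<phi> x) \<partial>M)\<^sup>2 = (\<integral>\<^sup>+x. ennreal (sqrt (w x)) * ennreal (\<phi> x / sqrt (w x)) \<partial>M)\<^sup>2"
    by simp
  also have "\<dots> \<le> (\<integral>\<^sup>+x. ennreal (sqrt (w x)) ^ 2 \<partial>M) * (\<integral>\<^sup>+x. ennreal (\<phi> x / sqrt (w x)) ^ 2 \<partial>M)"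
    by (rule Cauchy_Schwarz_nn_integral) auto
  also have "(\<lambda>x. ennreal (sqrt (w x)) ^ 2) = (\<lambda>x. ennreal (w x))"
    using nonneg by (simp add: ennreal_power)
  also have "(\<lambda>x. ennreal (\<phi> x / sqrt (w x)) ^ 2) = (\<lambda>x. ennreal ((\<phi> x)\<^sup>2 / w x))"
    using nonneg by (simp add: ennreal_power power_divide)
  finally show ?thesis .
qed

lemma freq_const_pos: "-3/2 < \<sigma> \<Longrightarrow> \<sigma> < 1/2 \<Longrightarrow> 0 < freq_const \<sigma> \<eta>"
  unfolding freq_const_def by (intro mult_pos_pos add_pos_nonneg) auto

lemma time_const_pos:
  assumes "a < 1" "-1 < s"
  shows "0 < time_const a s"
proof -
  have "0 < 2 powr a / (1 + s)" "0 < 2 powr (-s) / (1 - a)"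
    using assms by simp_all
  thus ?thesis by (simp add: time_const_def)
qed

lemma nn_integral_semigroup_weight_le:
  assumes \<sigma>: "-1/2 < \<sigma>" "\<sigma> \<le> 0" and "\<eta> > 0" "0 < \<tau>" "\<tau> \<le> t"
  shows "(\<integral>\<^sup>+ \<xi>. ennreal ((1 + \<xi>\<^sup>2) powr \<sigma> * \<xi>\<^sup>2 * exp (-(2 * \<tau> * psym \<eta> \<xi>))) \<partial>lborel)
    \<le> ennreal (exp (\<eta> * t) * (freq_const \<sigma> \<eta> * \<tau> powr (-3/2 - \<sigma>)))"
proof -
  have "(\<integral>\<^sup>+ \<xi>. ennreal ((1 + \<xi>\<^sup>2) powr \<sigma> * \<xi>\<^sup>2 * exp (-(2 * \<tau> * psym \<eta> \<xi>))) \<partial>lborel)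
      \<le> (\<integral>\<^sup>+ \<xi>. ennreal (exp (\<eta> * t)) * ennreal ((1 + \<xi>\<^sup>2) powr \<sigma> * \<xi>\<^sup>2 * exp (-(\<eta> * \<xi>\<^sup>2 * \<tau>))) \<partial>lborel)"
  proof (intro nn_integral_mono)
    fix \<xi> :: real
    have "(1 + \<xi>\<^sup>2) powr \<sigma> * \<xi>\<^sup>2 * exp (-(2 * \<tau> * psym \<eta> \<xi>))
        \<le> (1 + \<xi>\<^sup>2) powr \<sigma> * \<xi>\<^sup>2 * (exp (\<eta> * t) * exp (-(\<eta> * \<xi>\<^sup>2 * \<tau>)))"
      using assms by (intro mult_left_mono exp_psym_le) auto
    thus "ennreal ((1 + \<xi>\<^sup>2) powr \<sigma> * \<xi>\<^sup>2 * exp (-(2 * \<tau> * psym \<eta> \<xi>)))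
        \<le> ennreal (exp (\<eta> * t)) * ennreal ((1 + \<xi>\<^sup>2) powr \<sigma> * \<xi>\<^sup>2 * exp (-(\<eta> * \<xi>\<^sup>2 * \<tau>)))"
      by (simp add: ennreal_mult[symmetric] ennreal_leI ac_simps)
  qed
  also have "\<dots> = ennreal (exp (\<eta> * t)) * (\<integral>\<^sup>+ \<xi>. ennreal ((1 + \<xi>\<^sup>2) powr \<sigma> * \<xi>\<^sup>2 * exp (-(\<eta> * \<xi>\<^sup>2 * \<tau>))) \<partial>lborel)"
    by (rule nn_integral_cmult) measurable
  also have "\<dots> \<le> ennreal (exp (\<eta> * t)) * ennreal (freq_const \<sigma> \<eta> * \<tau> powr (-3/2 - \<sigma>))"
    using assms by (intro mult_left_mono nn_integral_heat_weight_le) auto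
  also have "\<dots> = ennreal (exp (\<eta> * t) * (freq_const \<sigma> \<eta> * \<tau> powr (-3/2 - \<sigma>)))"
    using freq_const_pos[of \<sigma> \<eta>] \<sigma> by (simp add: ennreal_mult)
  finally show ?thesis .
qed

lemma nn_integral_duhamel_majorant_sq_le:
  fixes t X :: real
  assumes "0 < t" "0 \<le> X"
  shows "(\<integral>\<^sup>+ y. ennreal (indicator {0<..<t} y * (exp (-((t - y) * psym \<eta> \<xi>)) * \<bar>\<xi>\<bar> * (y powr s * X))) \<partial>lborel)\<^sup>2
    \<le> (\<integral>\<^sup>+ y. ennreal (indicator {0<..<t} y * ((t - y) powr (-a) * y powr s)) \<partial>lborel)
      * (\<integral>\<^sup>+ y. ennreal (indicator {0<..<t} y *
            ((t - y) powr a * y powr s * X\<^sup>2 * (\<xi>\<^sup>2 * exp (-(2 * (t - y) * psym \<eta> \<xi>))))) \<partial>lborel)"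
proof -
  let ?\<phi> = "\<lambda>y. indicator {0<..<t} y * (exp (-((t - y) * psym \<eta> \<xi>)) * \<bar>\<xi>\<bar> * (y powr s * X))"
  let ?w = "\<lambda>y. indicator {0<..<t} y * ((t - y) powr (-a) * y powr s)"
  have "(\<integral>\<^sup>+ y. ennreal (?\<phi> y) \<partial>lborel)\<^sup>2
      \<le> (\<integral>\<^sup>+ y. ennreal (?w y) \<partial>lborel) * (\<integral>\<^sup>+ y. ennreal ((?\<phi> y)\<^sup>2 / ?w y) \<partial>lborel)"
  proof (rule nn_integral_Cauchy_Schwarz_weighted)
    show "?\<phi> \<in> borel_measurable lborel" unfolding psym_def by measurable
    show "?w \<in> borel_measurable lborel" by measurable
    show "0 \<le> ?\<phi> y" "0 \<le> ?w y" for y using assms by simp_all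
    show "?\<phi> y = 0" if "?w y = 0" for y using that by (auto simp: indicator_def split: if_splits)
  qed
  also have "(\<lambda>y. ennreal ((?\<phi> y)\<^sup>2 / ?w y)) = (\<lambda>y. ennreal (indicator {0<..<t} y *
      ((t - y) powr a * y powr s * X\<^sup>2 * (\<xi>\<^sup>2 * exp (-(2 * (t - y) * psym \<eta> \<xi>))))))"
  proof
    fix y
    define E where "E = exp (-((t - y) * psym \<eta> \<xi>))"
    have "exp (-(2 * (t - y) * psym \<eta> \<xi>)) = E\<^sup>2"
      unfolding E_def by (simp add: power2_eq_square flip: exp_add)
    thus "ennreal ((?\<phi> y)\<^sup>2 / ?w y) = ennreal (indicator {0<..<t} y *
        ((t - y) powr a * y powr s * X\<^sup>2 * (\<xi>\<^sup>2 * exp (-(2 * (t - y) * psym \<eta> \<xi>)))))"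
      unfolding E_def[symmetric]
      by (cases "y \<in> {0<..<t}") (simp_all add: powr_minus power_mult_distrib field_simps power2_eq_square[of "y powr s"])
  qed
  finally show ?thesis .
qed

lemma nn_integral_Hs_weight_majorant_le:
  assumes \<sigma>: "-1/2 < \<sigma>" "\<sigma> \<le> 0" and "\<eta> > 0"
  shows "(\<integral>\<^sup>+ \<xi>. ennreal ((1 + \<xi>\<^sup>2) powr \<sigma> * (indicator {0<..<t} y *
            ((t - y) powr (3/4 + \<sigma>/2) * y powr s * X\<^sup>2 * (\<xi>\<^sup>2 * exp (-(2 * (t - y) * psym \<eta> \<xi>)))))) \<partial>lborel)
    \<le> ennreal (exp (\<eta> * t) * freq_const \<sigma> \<eta> * X\<^sup>2)
      * ennreal (indicator {0<..<t} y * ((t - y) powr (-(3/4 + \<sigma>/2)) * y powr s))"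
proof (cases "y \<in> {0<..<t}")
  case True
  define c where "c = (t - y) powr (3/4 + \<sigma>/2) * y powr s * X\<^sup>2"
  have c: "c \<ge> 0" by (simp add: c_def)
  have "(\<integral>\<^sup>+ \<xi>. ennreal ((1 + \<xi>\<^sup>2) powr \<sigma> * (indicator {0<..<t} y *
            ((t - y) powr (3/4 + \<sigma>/2) * y powr s * X\<^sup>2 * (\<xi>\<^sup>2 * exp (-(2 * (t - y) * psym \<eta> \<xi>)))))) \<partial>lborel)
      = (\<integral>\<^sup>+ \<xi>. ennreal c * ennreal ((1 + \<xi>\<^sup>2) powr \<sigma> * \<xi>\<^sup>2 * exp (-(2 * (t - y) * psym \<eta> \<xi>))) \<partial>lborel)"
    using True c by (intro nn_integral_cong) (simp add: c_def ennreal_mult[symmetric] ac_simps)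
  also have "\<dots> = ennreal c * (\<integral>\<^sup>+ \<xi>. ennreal ((1 + \<xi>\<^sup>2) powr \<sigma> * \<xi>\<^sup>2 * exp (-(2 * (t - y) * psym \<eta> \<xi>))) \<partial>lborel)"
    by (rule nn_integral_cmult) (unfold psym_def, measurable)
  also have "\<dots> \<le> ennreal c * ennreal (exp (\<eta> * t) * (freq_const \<sigma> \<eta> * (t - y) powr (-3/2 - \<sigma>)))"
    using True assms by (intro mult_left_mono nn_integral_semigroup_weight_le) auto
  also have "\<dots> = ennreal (exp (\<eta> * t) * freq_const \<sigma> \<eta> * X\<^sup>2)
      * ennreal (indicator {0<..<t} y * ((t - y) powr (-(3/4 + \<sigma>/2)) * y powr s))"
  proof -
    have "(t - y) powr (3/4 + \<sigma>/2) * (t - y) powr (-3/2 - \<sigma>) = (t - y) powr (-(3/4 + \<sigma>/2))"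
      by (simp add: powr_add[symmetric])
    hence "c * (exp (\<eta> * t) * (freq_const \<sigma> \<eta> * (t - y) powr (-3/2 - \<sigma>)))
        = exp (\<eta> * t) * freq_const \<sigma> \<eta> * X\<^sup>2 * (indicator {0<..<t} y * ((t - y) powr (-(3/4 + \<sigma>/2)) * y powr s))"
      using True by (simp add: c_def ac_simps)
    moreover have "0 \<le> freq_const \<sigma> \<eta>" using freq_const_pos[of \<sigma> \<eta>] \<sigma> by simp
    ultimately show ?thesis using c by (simp add: ennreal_mult[symmetric])
  qed
  finally show ?thesis .
qed simp

definition duhamel_const :: "real \<Rightarrow> real \<Rightarrow> real \<Rightarrow> real" where
  "duhamel_const \<sigma> s \<eta> = sqrt (freq_const \<sigma> \<eta> / (2 * pi)) * time_const (3/4 + \<sigma>/2) s"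

lemma duhamel_const_pos:
  assumes "-1/2 < \<sigma>" "\<sigma> \<le> 0" "-1 < s"
  shows "0 < duhamel_const \<sigma> s \<eta>"
  using assms freq_const_pos[of \<sigma> \<eta>] time_const_pos[of "3/4 + \<sigma>/2" s]
  by (simp add: duhamel_const_def)

lemma Hs_sq_le_if_duhamel_majorant:
  fixes \<sigma> s \<eta> t X :: real and D :: "real \<Rightarrow> complex"
  assumes \<sigma>: "-1/2 < \<sigma>" "\<sigma> \<le> 0" and s: "-1 < s" "s < 0" and \<eta>: "\<eta> > 0" and t: "0 < t" and X: "0 \<le> X"
    and majorant: "\<And>\<xi>. ennreal (cmod (D \<xi>)) \<le> (\<integral>\<^sup>+ y. ennreal (indicator {0<..<t} y *
          (exp (-((t - y) * psym \<eta> \<xi>)) * \<bar>\<xi>\<bar> * (y powr s * X))) \<partial>lborel)"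
  shows "Hs_sq \<sigma> D \<le> ennreal (2 * pi * (duhamel_const \<sigma> s \<eta> * exp (\<eta> * t / 2) * t powr (1/4 - \<sigma>/2 + s) * X)\<^sup>2)"
proof -
  \<comment> \<open>Chosen so that the frequency integral, of order \<open>(t-y)^(-3/2-\<sigma>)\<close>, times \<open>(t-y)^a\<close> is again
    the Cauchy-Schwarz weight \<open>(t-y)^(-a)\<close>.\<close>
  define a where "a = 3/4 + \<sigma>/2"
  have a: "0 < a" "a < 1" using \<sigma> by (simp_all add: a_def)
  define J where "J = (\<integral>\<^sup>+ y. ennreal (indicator {0<..<t} y * ((t - y) powr (-a) * y powr s)) \<partial>lborel)"
  define F where "F \<xi> y = indicator {0<..<t} y *
      ((t - y) powr a * y powr s * X\<^sup>2 * (\<xi>\<^sup>2 * exp (-(2 * (t - y) * psym \<eta> \<xi>))))" for \<xi> y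
  define C where "C = exp (\<eta> * t) * freq_const \<sigma> \<eta> * X\<^sup>2"
  have meas: "(\<lambda>(\<xi>, y). ennreal ((1 + \<xi>\<^sup>2) powr \<sigma> * F \<xi> y)) \<in> borel_measurable (lborel \<Otimes>\<^sub>M lborel)"
    unfolding F_def psym_def by measurable
  have "Hs_sq \<sigma> D \<le> (\<integral>\<^sup>+ \<xi>. J * (\<integral>\<^sup>+ y. ennreal ((1 + \<xi>\<^sup>2) powr \<sigma> * F \<xi> y) \<partial>lborel) \<partial>lborel)"
    unfolding Hs_sq_def
  proof (rule nn_integral_mono)
    fix \<xi> :: real
    have "ennreal (cmod (D \<xi>)) ^ 2 \<le> J * (\<integral>\<^sup>+ y. ennreal (F \<xi> y) \<partial>lborel)"
      using power_mono[OF majorant[of \<xi>], of 2] nn_integral_duhamel_majorant_sq_le[OF t X, of \<eta> \<xi> s a]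
      unfolding J_def F_def by simp
    hence "ennreal ((1 + \<xi>\<^sup>2) powr \<sigma>) * ennreal (cmod (D \<xi>)) ^ 2
        \<le> ennreal ((1 + \<xi>\<^sup>2) powr \<sigma>) * (J * (\<integral>\<^sup>+ y. ennreal (F \<xi> y) \<partial>lborel))"
      by (rule mult_left_mono) simp
    also have "\<dots> = J * (ennreal ((1 + \<xi>\<^sup>2) powr \<sigma>) * (\<integral>\<^sup>+ y. ennreal (F \<xi> y) \<partial>lborel))"
      by (simp add: ac_simps)
    also have "ennreal ((1 + \<xi>\<^sup>2) powr \<sigma>) * (\<integral>\<^sup>+ y. ennreal (F \<xi> y) \<partial>lborel)
        = (\<integral>\<^sup>+ y. ennreal ((1 + \<xi>\<^sup>2) powr \<sigma> * F \<xi> y) \<partial>lborel)"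
      by (subst nn_integral_cmult[symmetric]) (auto simp: F_def psym_def ennreal_mult)
    finally show "ennreal ((1 + \<xi>\<^sup>2) powr \<sigma> * (cmod (D \<xi>))\<^sup>2)
        \<le> J * (\<integral>\<^sup>+ y. ennreal ((1 + \<xi>\<^sup>2) powr \<sigma> * F \<xi> y) \<partial>lborel)"
      by (simp add: ennreal_mult ennreal_power)
  qed
  also have "\<dots> = J * (\<integral>\<^sup>+ \<xi>. (\<integral>\<^sup>+ y. ennreal ((1 + \<xi>\<^sup>2) powr \<sigma> * F \<xi> y) \<partial>lborel) \<partial>lborel)"
    by (rule nn_integral_cmult) (use meas in measurable)
  also have "(\<integral>\<^sup>+ \<xi>. (\<integral>\<^sup>+ y. ennreal ((1 + \<xi>\<^sup>2) powr \<sigma> * F \<xi> y) \<partial>lborel) \<partial>lborel)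
      = (\<integral>\<^sup>+ y. (\<integral>\<^sup>+ \<xi>. ennreal ((1 + \<xi>\<^sup>2) powr \<sigma> * F \<xi> y) \<partial>lborel) \<partial>lborel)"
    using meas by (rule lborel_pair.Fubini'[symmetric])
  also have "J * (\<integral>\<^sup>+ y. (\<integral>\<^sup>+ \<xi>. ennreal ((1 + \<xi>\<^sup>2) powr \<sigma> * F \<xi> y) \<partial>lborel) \<partial>lborel)
      \<le> J * (\<integral>\<^sup>+ y. ennreal C * ennreal (indicator {0<..<t} y * ((t - y) powr (-a) * y powr s)) \<partial>lborel)"
    using nn_integral_Hs_weight_majorant_le[OF \<sigma> \<eta>]
    by (intro mult_left_mono nn_integral_mono) (simp_all add: F_def C_def a_def)
  also have "\<dots> = ennreal C * J\<^sup>2"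
    unfolding J_def by (simp add: nn_integral_cmult power2_eq_square ac_simps)
  also have "\<dots> \<le> ennreal C * (ennreal (time_const a s * t powr (1 - a + s)))\<^sup>2"
    using nn_integral_time_kernel_le[OF t a s] unfolding J_def by (intro mult_left_mono power_mono) auto
  also have "\<dots> = ennreal (2 * pi * (duhamel_const \<sigma> s \<eta> * exp (\<eta> * t / 2) * t powr (1/4 - \<sigma>/2 + s) * X)\<^sup>2)"
  proof -
    have "0 \<le> freq_const \<sigma> \<eta>" "0 \<le> time_const a s"
      using freq_const_pos[of \<sigma> \<eta>] time_const_pos[of a s] \<sigma> a s by simp_all
    moreover have "(exp (\<eta> * t / 2))\<^sup>2 = exp (\<eta> * t)"
      by (simp add: power2_eq_square flip: exp_add)
    moreover have "1 - a + s = 1/4 - \<sigma>/2 + s" by (simp add: a_def)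
    ultimately show ?thesis
      by (simp add: C_def duhamel_const_def a_def ennreal_mult[symmetric] ennreal_power power_mult_distrib)
  qed
  finally show ?thesis .
qed

lemma Xweight_duhamel_le:
  fixes \<beta> \<eta> s :: real
  assumes "\<eta> > 0" "-1/2 < s" "s < 0" "in_X s T u" "in_X s T v" "t \<in> {0<..T}"
  shows "in_Hs s (duhamel \<beta> \<eta> u v t)" "in_L2 (duhamel \<beta> \<eta> u v t)"
    and "Xweight s (duhamel \<beta> \<eta> u v) t
      \<le> (duhamel_const s s \<eta> + duhamel_const 0 s \<eta>) * exp (\<eta> * t / 2) * t powr ((1 + 2 * s) / 4)
         * (X_norm s T u * X_norm s T v)"
proof -
  define X where "X = X_norm s T u * X_norm s T v"
  define D where "D = duhamel \<beta> \<eta> u v t"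
  have X: "X \<ge> 0" unfolding X_def using X_norm_nonneg assms(4-6) by simp
  have majorant: "\<And>\<xi>. ennreal (cmod (D \<xi>)) \<le> (\<integral>\<^sup>+ y. ennreal (indicator {0<..<t} y *
          (exp (-((t - y) * psym \<eta> \<xi>)) * \<bar>\<xi>\<bar> * (y powr s * X))) \<partial>lborel)"
    unfolding D_def X_def using assms by (intro norm_duhamel_le) auto
  have meas: "D \<in> borel_measurable lborel"
    unfolding D_def using assms by (intro borel_measurable_duhamel) auto
  let ?M = "\<lambda>\<sigma>. duhamel_const \<sigma> s \<eta> * exp (\<eta> * t / 2) * t powr (1/4 - \<sigma>/2 + s) * X"
  have M_nonneg: "0 \<le> ?M \<sigma>" if "-1/2 < \<sigma>" "\<sigma> \<le> 0" for \<sigma>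
    using duhamel_const_pos[OF that, of s \<eta>] assms X by simp
  have Hs: "Hs_sq s D \<le> ennreal (2 * pi * (?M s)\<^sup>2)"
    by (rule Hs_sq_le_if_duhamel_majorant[OF _ _ _ _ _ _ X majorant]) (use assms in auto)
  have L2: "Hs_sq 0 D \<le> ennreal (2 * pi * (?M 0)\<^sup>2)"
    by (rule Hs_sq_le_if_duhamel_majorant[OF _ _ _ _ _ _ X majorant]) (use assms in auto)
  show "in_Hs s (duhamel \<beta> \<eta> u v t)" "in_L2 (duhamel \<beta> \<eta> u v t)"
    using meas le_less_trans[OF Hs] le_less_trans[OF L2] by (simp_all add: D_def in_Hs_def)
  have "Hs_norm s D \<le> ?M s"
    by (rule Hs_norm_le_if_Hs_sq_le[OF Hs M_nonneg]) (use assms in auto)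
  moreover have "L2_norm D \<le> ?M 0"
    by (rule Hs_norm_le_if_Hs_sq_le[OF L2 M_nonneg]) (use assms in auto)
  ultimately have "Xweight s (duhamel \<beta> \<eta> u v) t \<le> ?M s + t powr (\<bar>s\<bar> / 2) * ?M 0"
    unfolding Xweight_def D_def[symmetric] by (intro add_mono mult_left_mono) simp_all
  also have "\<dots> = (duhamel_const s s \<eta> + duhamel_const 0 s \<eta>) * exp (\<eta> * t / 2) * t powr ((1 + 2 * s) / 4) * X"
  proof -
    have "\<bar>s\<bar> / 2 + (1/4 - 0/2 + s) = (1 + 2 * s) / 4" using assms by simp
    hence "t powr (\<bar>s\<bar> / 2) * t powr (1/4 - 0/2 + s) = t powr ((1 + 2 * s) / 4)"
      by (simp only: powr_add[symmetric])
    moreover have "t powr (1/4 - s/2 + s) = t powr ((1 + 2 * s) / 4)"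
      by (intro arg_cong[where f = "(powr) t"]) (simp add: field_simps)
    ultimately show ?thesis by (simp add: algebra_simps)
  qed
  finally show "Xweight s (duhamel \<beta> \<eta> u v) t
      \<le> (duhamel_const s s \<eta> + duhamel_const 0 s \<eta>) * exp (\<eta> * t / 2) * t powr ((1 + 2 * s) / 4)
         * (X_norm s T u * X_norm s T v)"
    unfolding X_def .
qed

theorem proposition2p4:
  fixes \<beta> \<eta> s :: real
  assumes "\<beta> > 0" and "\<eta> > 0" and "-1/2 < s" and "s < 0"
  shows "\<exists>C>0. \<forall>T u v. 0 \<le> T \<longrightarrow> T \<le> 1 \<longrightarrow> in_X s T u \<longrightarrow> in_X s T v \<longrightarrow>
           (\<forall>t\<in>{0<..T}. in_Hs s (duhamel \<beta> \<eta> u v t) \<and> in_L2 (duhamel \<beta> \<eta> u v t) \<and>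
              Xweight s (duhamel \<beta> \<eta> u v) t
                \<le> C * exp (\<eta> * T / 2) * T powr ((1 + 2 * s) / 4) * X_norm s T u * X_norm s T v)"
proof (intro exI[of _ "duhamel_const s s \<eta> + duhamel_const 0 s \<eta>"] conjI allI impI ballI)
  let ?C = "duhamel_const s s \<eta> + duhamel_const 0 s \<eta>"
  show C: "?C > 0"
    using assms by (intro add_pos_pos duhamel_const_pos) auto
  fix T u v t
  assume "in_X s T u" "in_X s T v" and t: "t \<in> {0<..T}"
  note Xweight = Xweight_duhamel_le[OF assms(2-4) this, of \<beta>]
  show "in_Hs s (duhamel \<beta> \<eta> u v t)" "in_L2 (duhamel \<beta> \<eta> u v t)"
    using Xweight(1,2) .
  have "exp (\<eta> * t / 2) * t powr ((1 + 2 * s) / 4) \<le> exp (\<eta> * T / 2) * T powr ((1 + 2 * s) / 4)"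
    using t assms by (intro mult_mono powr_mono2) auto
  hence "?C * exp (\<eta> * t / 2) * t powr ((1 + 2 * s) / 4) * (X_norm s T u * X_norm s T v)
      \<le> ?C * exp (\<eta> * T / 2) * T powr ((1 + 2 * s) / 4) * (X_norm s T u * X_norm s T v)"
    using C X_norm_nonneg[OF \<open>in_X s T u\<close> t] X_norm_nonneg[OF \<open>in_X s T v\<close> t]
    by (simp only: mult.assoc[of ?C]) (intro mult_left_mono mult_right_mono; simp)
  with Xweight(3) show "Xweight s (duhamel \<beta> \<eta> u v) t
      \<le> ?C * exp (\<eta> * T / 2) * T powr ((1 + 2 * s) / 4) * X_norm s T u * X_norm s T v"
    by (simp add: mult.assoc)
qed

end
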